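(* Let $\lambda\in\mathbb{F}$ with $\lambda\neq0,1$, and let $0\le\delta\le1-q^{-1}$. Then $$\mathcal{D}_\lambda^{\le\delta}\subseteq\bigcup_{\mu_q(n)\le\ell<n}\ \bigcup_{J\in\Omega_\ell}\ \bigcup_{(a,b)\in(\tilde J^*\times\tilde J^* )^{\le\delta}}\mathcal{D}_{a,b}.$$
   Context: Let $q$ be a prime power, $\mathbb{F}=\mathbb{F}_{q^2}$, $G$ a finite abelian group of odd order $n$ with $\gcd(n,q)=1$, and $\mathbb{F}G$ its group algebra; scalars are identified with multiples of $1_G$. Let $\tau:\mathbb{F}G\to\mathbb{F}G$, $\sum_g\alpha_g g\mapsto\sum_g\alpha_g^q g^{-1}$. Let $e_0=\frac1n\sum_g g$. The primitive idempotents are $e_0$; $e_1,\dots,e_r$ ($\neq e_0$, fixed by $\tau$); and $e_{r+1},\tau(e_{r+1}),\dots,e_{r+s},\tau(e_{r+s})$ (not fixed by $\tau$). Put $\widehat{e}_{r+j}=e_{r+j}+\tau(e_{r+j})$, $\widehat{E}^\dagger=\{e_1,\dots,e_r,\widehat{e}_{r+1},\dots,\widehat{e}_{r+s}\}$. Let $\mu_q(n)=\min\{\dim_{\mathbb{F}}\mathbb{F}Ge: e\text{ primitive idempotent},\ e\neq e_0\}$. The Hamming weight $\mathrm{wt}_H$ of $\sum_g a_gg$ is $|\{g:a_g\ne0\}|$, and $\mathrm{wt}_H(a,b)=\mathrm{wt}_H(a)+\mathrm{wt}_H(b)$. For $a,b\in\mathbb{F}G$, $\mathcal{C}_{a,b}=\{(sa,sb):s\in\mathbb{F}G\}$;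 $\mathcal{D}_\lambda=\{\mathcal{C}_{1,\beta}:\beta\in\mathbb{F}G,\ \beta\,\tau(\beta)=\lambda-1\}$; $\mathcal{D}_{a,b}=\{\mathcal{C}\in\mathcal{D}_\lambda:(a,b)\in\mathcal{C}\}$; $\mathcal{D}_\lambda^{\le\delta}=\{\mathcal{C}\in\mathcal{D}_\lambda: \min_{0\ne c\in\mathcal{C}}\mathrm{wt}_H(c)/(2n)\le\delta\}$. For $a\in\mathbb{F}G$, $\widehat{E}_a^\dagger=\{e\in\widehat{E}^\dagger:ea\neq0\}$ and $L_a=\bigoplus_{e\in\widehat{E}_a^\dagger}\mathbb{F}Ge$. For an integer $\ell$, $\Omega_\ell$ is the set of subspaces $J=\bigoplus_{e\in S}\mathbb{F}Ge$ with $S\subseteq\widehat{E}^\dagger$ and $\dim_{\mathbb{F}}J=\ell$. For $J\in\Omega_\ell$, $\tilde J=\mathbb{F}Ge_0+J$, $\tilde J^*=\{a\in\tilde J: L_a=J\}$, and $(\tilde J^*\times\tilde J^* )^{\le\delta}=\{(a,b)\in\tilde J^*\times\tilde J^*:\mathrm{wt}_H(a,b)\le 2n\delta\}$. *)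

theory Defs
  imports Complex_Main "HOL-Computational_Algebra.Primes" "HOL-Library.Function_Algebras" "HOL-Library.Cardinality"
begin

text \<open>The finite abelian group G is a finite type 'g of class ab_group_add (written
additively: identity 0, inverse of g is -g).
The group algebra FG is the type 'g => 'a (coefficient functions).\<close>

definition gmul :: "('g::{ab_group_add,finite} \<Rightarrow> 'a::comm_ring_1) \<Rightarrow> ('g \<Rightarrow> 'a) \<Rightarrow> ('g \<Rightarrow> 'a)" where
  "gmul a b = (\<lambda>g. \<Sum>h\<in>UNIV. a h * b (g - h))"

text \<open>scalar c identified with c times 1_G\<close>
definition gscalar :: "'a::comm_ring_1 \<Rightarrow> ('g::{ab_group_add,finite} \<Rightarrow> 'a)" where
  "gscalar c = (\<lambda>g. if g = 0 then c else 0)"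

definition gscale :: "'a::field \<Rightarrow> ('g \<Rightarrow> 'a) \<Rightarrow> ('g \<Rightarrow> 'a)" where
  "gscale c a = (\<lambda>g. c * a g)"

definition gdim :: "('g \<Rightarrow> 'a::field) set \<Rightarrow> nat" where
  "gdim S = vector_space.dim gscale S"

text \<open>tau(sum a_g g) = sum a_g^q g^{-1}\<close>
definition gtau :: "nat \<Rightarrow> ('g::{ab_group_add,finite} \<Rightarrow> 'a::field) \<Rightarrow> ('g \<Rightarrow> 'a)" where
  "gtau q a = (\<lambda>g. (a (- g)) ^ q)"

definition ge0 :: "'g::{ab_group_add,finite} \<Rightarrow> 'a::field" where
  "ge0 = (\<lambda>g. inverse (of_nat CARD('g)))"

definition gidem :: "('g::{ab_group_add,finite} \<Rightarrow> 'a::comm_ring_1) \<Rightarrow> bool" where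
  "gidem e \<longleftrightarrow> gmul e e = e"

definition prim_idem :: "('g::{ab_group_add,finite} \<Rightarrow> 'a::comm_ring_1) \<Rightarrow> bool" where
  "prim_idem e \<longleftrightarrow> e \<noteq> 0 \<and> gidem e \<and>
     \<not> (\<exists>f1 f2. f1 \<noteq> 0 \<and> f2 \<noteq> 0 \<and> gidem f1 \<and> gidem f2 \<and> gmul f1 f2 = 0 \<and> e = f1 + f2)"

definition gideal :: "('g::{ab_group_add,finite} \<Rightarrow> 'a::comm_ring_1) \<Rightarrow> ('g \<Rightarrow> 'a) set" where
  "gideal e = {gmul s e | s. True}"

definition idsum :: "('g::{ab_group_add,finite} \<Rightarrow> 'a::comm_ring_1) set \<Rightarrow> ('g \<Rightarrow> 'a) set" where
  "idsum S = {\<Sum>e\<in>S. gmul (s e) e | s. True}"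

definition Ehat :: "nat \<Rightarrow> ('g::{ab_group_add,finite} \<Rightarrow> 'a::field) set" where
  "Ehat q = {e. prim_idem e \<and> e \<noteq> ge0 \<and> gtau q e = e}
          \<union> {e + gtau q e | e. prim_idem e \<and> gtau q e \<noteq> e}"

definition mu :: "'g::{ab_group_add,finite} itself \<Rightarrow> 'a::field itself \<Rightarrow> nat" where
  "mu _ _ = Min {gdim (gideal e) | e :: 'g \<Rightarrow> 'a. prim_idem e \<and> e \<noteq> ge0}"

definition Lset :: "nat \<Rightarrow> ('g::{ab_group_add,finite} \<Rightarrow> 'a::field) \<Rightarrow> ('g \<Rightarrow> 'a) set" where
  "Lset q a = idsum {e \<in> Ehat q. gmul e a \<noteq> 0}"

definition Omega :: "nat \<Rightarrow> nat \<Rightarrow> ('g::{ab_group_add,finite} \<Rightarrow> 'a::field) set set" where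
  "Omega q l = {idsum S | S. S \<subseteq> Ehat q \<and> gdim (idsum S) = l}"

definition Jtilde :: "('g::{ab_group_add,finite} \<Rightarrow> 'a::field) set \<Rightarrow> ('g \<Rightarrow> 'a) set" where
  "Jtilde J = {x + y | x y. x \<in> gideal ge0 \<and> y \<in> J}"

definition Jstar :: "nat \<Rightarrow> ('g::{ab_group_add,finite} \<Rightarrow> 'a::field) set \<Rightarrow> ('g \<Rightarrow> 'a) set" where
  "Jstar q J = {a \<in> Jtilde J. Lset q a = J}"

definition wt :: "('g::finite \<Rightarrow> 'a::zero) \<Rightarrow> nat" where
  "wt a = card {g. a g \<noteq> 0}"

definition wt2 :: "('g::finite \<Rightarrow> 'a::zero) \<times> ('g \<Rightarrow> 'a) \<Rightarrow> nat" where
  "wt2 c = wt (fst c) + wt (snd c)"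

definition code :: "('g::{ab_group_add,finite} \<Rightarrow> 'a::comm_ring_1) \<Rightarrow> ('g \<Rightarrow> 'a) \<Rightarrow> (('g \<Rightarrow> 'a) \<times> ('g \<Rightarrow> 'a)) set" where
  "code a b = {(gmul s a, gmul s b) | s. True}"

definition Dl :: "nat \<Rightarrow> 'a::field \<Rightarrow> (('g::{ab_group_add,finite} \<Rightarrow> 'a) \<times> ('g \<Rightarrow> 'a)) set set" where
  "Dl q lam = {code (gscalar 1) \<beta> | \<beta>. gmul \<beta> (gtau q \<beta>) = gscalar (lam - 1)}"

definition Dab :: "nat \<Rightarrow> 'a::field \<Rightarrow> ('g::{ab_group_add,finite} \<Rightarrow> 'a) \<Rightarrow> ('g \<Rightarrow> 'a) \<Rightarrow> (('g \<Rightarrow> 'a) \<times> ('g \<Rightarrow> 'a)) set set" where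
  "Dab q lam a b = {C \<in> Dl q lam. (a, b) \<in> C}"

definition reldist :: "(('g::{ab_group_add,finite} \<Rightarrow> 'a::zero) \<times> ('g \<Rightarrow> 'a)) set \<Rightarrow> real" where
  "reldist C = Min {real (wt2 c) / (2 * real CARD('g)) | c. c \<in> C \<and> c \<noteq> (0, 0)}"

definition Dle :: "nat \<Rightarrow> 'a::field \<Rightarrow> real \<Rightarrow> (('g::{ab_group_add,finite} \<Rightarrow> 'a) \<times> ('g \<Rightarrow> 'a)) set set" where
  "Dle q lam \<delta> = {C \<in> Dl q lam. reldist C \<le> \<delta>}"

definition pairs_le :: "nat \<Rightarrow> ('g::{ab_group_add,finite} \<Rightarrow> 'a::field) set \<Rightarrow> real \<Rightarrow> (('g \<Rightarrow> 'a) \<times> ('g \<Rightarrow> 'a)) set" where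
  "pairs_le q J \<delta> = {(a, b). a \<in> Jstar q J \<and> b \<in> Jstar q J \<and>
       real (wt2 (a, b)) \<le> 2 * real CARD('g) * \<delta>}"

end

(*
  Write C = C_{1,beta} with beta tau(beta) = lam - 1 and take a nonzero codeword (s, s beta)
  of minimal weight, so wt (s, s beta) <= 2 n delta. As lam <> 1, multiplication by beta is
  injective, hence s and s beta are annihilated by the same idempotents of Ehat, and
  J := L_s = L_{s beta} contains both in its J~*.

  The primitive idempotents of the finite commutative ring FG are pairwise orthogonal and sum
  to 1; tau permutes them and fixes e_0, so grouping them into tau-orbits gives
  1 = e_0 + (sum of Ehat). Consequently every a lies in FG e_0 + L_a; J is killed by e_0, so it
  lies in the augmentation ideal and dim J < n; and J <> 0, since otherwise s and s beta would
  be nonzero constants of total weight 2n > 2 n delta. Thus J contains FG e for a primitive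
  e <> e_0, whence mu_q(n) <= dim J.
*)

theory Submission
  imports Defs "HOL-Number_Theory.Residues"
begin

section \<open>Finite fields\<close>

text \<open>The library's \<open>finite_field_power_card_eq_same\<close> needs the class \<open>finite_field\<close>;
  for a type of sort \<open>{field, finite}\<close> we go through the finite group of nonzero elements.\<close>

definition nonzero_mult_group :: "'a::field monoid" where
  "nonzero_mult_group = \<lparr>carrier = - {0}, mult = (*), one = 1\<rparr>"

lemma comm_group_nonzero_mult_group: "comm_group (nonzero_mult_group :: 'a::field monoid)"
  by (rule comm_groupI) (auto simp: nonzero_mult_group_def intro!: bexI[of _ "inverse x" for x])

lemma nat_pow_nonzero_mult_group: "x [^]\<^bsub>nonzero_mult_group\<^esub> (n::nat) = (x::'a::field) ^ n"
  by (induction n) (simp_all add: nonzero_mult_group_def mult.commute)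

lemma finite_field_power_card: "(x::'a::{field,finite}) ^ CARD('a) = x"
proof (cases "x = 0")
  case False
  have "CARD('a) = Suc (card (- {0::'a}))"
    by (simp add: Compl_eq_Diff_UNIV card_Diff_singleton)
  moreover have "x ^ card (- {0::'a}) = 1"
    using comm_group.power_order_eq_one[OF comm_group_nonzero_mult_group, of x] False
    by (simp add: nat_pow_nonzero_mult_group) (simp add: nonzero_mult_group_def)
  ultimately show ?thesis by simp
qed simp

lemma CHAR_eq_if_card_prime_power:
  assumes "prime p" "m > 0" "CARD('a::{field,finite}) = p ^ m"
  shows "CHAR('a) = p"
proof -
  have "prime CHAR('a)"
    using prime_CHAR_semidom finite_imp_CHAR_pos[where ?'a = 'a] by simp
  moreover have "CHAR('a) dvd p ^ m"
    using CHAR_dvd_CARD[where ?'a = 'a] assms(3) by simp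
  ultimately show ?thesis
    using assms(1) prime_dvd_power primes_dvd_imp_eq by blast
qed

lemma finite_field_card_q_square:
  assumes "prime p" and "k > 0" and "q = p ^ k" and card: "CARD('a::{field,finite}) = q ^ 2"
  shows "(x + y) ^ q = x ^ q + (y :: 'a) ^ q" and "(x ^ q) ^ q = x"
    and "coprime n q \<Longrightarrow> of_nat n \<noteq> (0 :: 'a)"
proof -
  have char: "CHAR('a) = p"
    using assms by (intro CHAR_eq_if_card_prime_power[of p "k * 2"]) (simp_all add: power_mult)
  show "(x + y) ^ q = x ^ q + y ^ q"
    using assms(1,3) by (intro freshmans_dream') (simp_all add: char)
  show "(x ^ q) ^ q = x"
    using finite_field_power_card[of x] by (simp add: card power2_eq_square flip: power_mult)
  assume "coprime n q"
  show "of_nat n \<noteq> (0 :: 'a)"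
  proof
    assume "of_nat n = (0 :: 'a)"
    then have "p dvd n" by (simp add: of_nat_eq_0_iff_char_dvd char)
    moreover have "p dvd q" using assms(2,3) by simp
    ultimately show False using \<open>coprime n q\<close> \<open>prime p\<close> coprime_common_divisor not_prime_unit by blast
  qed
qed

section \<open>Primitive idempotents of a finite commutative ring\<close>

text \<open>The ring is given by a multiplication \<open>m\<close> with unit \<open>u\<close> on an additive group, because
  the group algebra is modelled on the function type, which already carries the pointwise
  product.\<close>

locale comm_mult =
  fixes m :: "'b::ab_group_add \<Rightarrow> 'b \<Rightarrow> 'b" and u :: 'b
  assumes m_assoc: "m (m a b) c = m a (m b c)"
    and m_comm: "m a b = m b a"
    and m_unit: "m u a = a"
    and m_add: "m a (b + c) = m a b + m a c"
begin

lemma m_add_left: "m (a + b) c = m a c + m b c"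
  using m_add[of c a b] by (simp add: m_comm[of c])

lemma m_left_commute: "m a (m b c) = m b (m a c)"
  by (simp add: m_assoc[symmetric] m_comm[of a b])

lemma m_zero [simp]: "m a 0 = 0"
  using m_add[of a 0 0] by simp

lemma m_zero_left [simp]: "m 0 a = 0"
  using m_zero[of a] by (simp add: m_comm[of 0])

lemma m_diff: "m a (b - c) = m a b - m a c"
  using m_add[of a "b - c" c] by (simp add: eq_diff_eq)

lemma m_unit_right: "m a u = a"
  using m_unit[of a] by (simp add: m_comm[of a])

lemma m_sum: "m a (sum f S) = (\<Sum>x\<in>S. m a (f x))"
  by (induction S rule: infinite_finite_induct) (simp_all add: m_add)

lemma m_sum_left: "m (sum f S) a = (\<Sum>x\<in>S. m (f x) a)"
  by (induction S rule: infinite_finite_induct) (simp_all add: m_add_left)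

definition prim :: "'b \<Rightarrow> bool" where
  "prim e \<longleftrightarrow> e \<noteq> 0 \<and> m e e = e \<and>
     \<not> (\<exists>f1 f2. f1 \<noteq> 0 \<and> f2 \<noteq> 0 \<and> m f1 f1 = f1 \<and> m f2 f2 = f2 \<and> m f1 f2 = 0 \<and> e = f1 + f2)"

lemma prim_idem: "prim e \<Longrightarrow> m e e = e"
  by (simp add: prim_def)

lemma prim_nonzero: "prim e \<Longrightarrow> e \<noteq> 0"
  by (simp add: prim_def)

lemma prim_idem_below:
  assumes "prim e" and "m x x = x" and "m e x = x"
  shows "x = 0 \<or> x = e"
proof (rule ccontr) \<comment> \<open>otherwise \<open>e = x + (e - x)\<close> splits \<open>e\<close>\<close>
  assume "\<not> (x = 0 \<or> x = e)"
  moreover have "m x e = x" using assms(3) by (simp add: m_comm[of x])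
  ultimately have "x \<noteq> 0 \<and> e - x \<noteq> 0 \<and> m x x = x \<and> m (e - x) (e - x) = e - x \<and> m x (e - x) = 0
      \<and> e = x + (e - x)"
    using assms by (auto simp: m_diff m_comm[of "e - x"] prim_idem)
  with assms(1) show False unfolding prim_def by blast
qed

lemma primI:
  assumes "e \<noteq> 0" and "m e e = e" and "\<And>x. m x x = x \<Longrightarrow> m e x = x \<Longrightarrow> x = 0 \<or> x = e"
  shows "prim e"
  unfolding prim_def
proof (intro conjI assms(1,2) notI)
  assume "\<exists>f1 f2. f1 \<noteq> 0 \<and> f2 \<noteq> 0 \<and> m f1 f1 = f1 \<and> m f2 f2 = f2 \<and> m f1 f2 = 0 \<and> e = f1 + f2"
  then obtain f1 f2 where f: "f1 \<noteq> 0" "f2 \<noteq> 0" "m f1 f1 = f1" "m f1 f2 = 0" "e = f1 + f2"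
    by blast
  have "m e f1 = f1" using f by (simp add: m_add_left m_comm[of f2])
  with assms(3)[of f1] f show False by auto
qed

lemma prim_orthogonal:
  assumes "prim e" and "prim f" and "e \<noteq> f"
  shows "m e f = 0"
proof -
  have ex: "m e (m e f) = m e f" using prim_idem[OF assms(1)] by (simp add: m_assoc[symmetric])
  have fx: "m f (m e f) = m e f" using prim_idem[OF assms(2)] by (simp add: m_left_commute[of f])
  have "m (m e f) (m e f) = m e f" using ex fx by (simp add: m_assoc)
  then show ?thesis
    using prim_idem_below[OF assms(1) _ ex] prim_idem_below[OF assms(2) _ fx] assms(3) by auto
qed

definition idem_decomp :: "'b set \<Rightarrow> bool" where
  "idem_decomp A \<longleftrightarrow> (\<forall>e\<in>A. e \<noteq> 0 \<and> m e e = e) \<and> (\<forall>e\<in>A. \<forall>f\<in>A. e \<noteq> f \<longrightarrow> m e f = 0)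
     \<and> (\<Sum>e\<in>A. e) = u"

lemma idem_decompD:
  assumes "idem_decomp A"
  shows "e \<in> A \<Longrightarrow> e \<noteq> 0" and "e \<in> A \<Longrightarrow> m e e = e"
    and "e \<in> A \<Longrightarrow> f \<in> A \<Longrightarrow> e \<noteq> f \<Longrightarrow> m e f = 0" and "(\<Sum>e\<in>A. e) = u"
  using assms unfolding idem_decomp_def by auto

lemma idem_decomp_split:
  assumes "finite A" and A: "idem_decomp A" and "e \<in> A"
    and f: "f1 \<noteq> 0" "f2 \<noteq> 0" "m f1 f1 = f1" "m f2 f2 = f2" "m f1 f2 = 0" and e: "e = f1 + f2"
  shows "idem_decomp (insert f1 (insert f2 (A - {e})))"
    and "card (insert f1 (insert f2 (A - {e}))) = Suc (card A)"
proof -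
  have f21: "m f2 f1 = 0" using f(5) by (simp add: m_comm)
  have f_e: "m f1 e = f1" "m f2 e = f2" using f f21 e by (simp_all add: m_add)
  have orth1: "m f g = 0" if "m f e = f" and "g \<in> A - {e}" for f g
  proof -
    have "m e g = 0" using idem_decompD(3)[OF A \<open>e \<in> A\<close>, of g] that(2) by auto
    then show ?thesis using m_assoc[of f e g] that(1) by simp
  qed
  have orth: "m f1 g = 0" "m f2 g = 0" "m g f1 = 0" "m g f2 = 0" if "g \<in> A - {e}" for g
    using orth1[OF f_e(1) that] orth1[OF f_e(2) that] by (simp_all add: m_comm[of g])
  have new: "f1 \<notin> A - {e}" "f2 \<notin> A - {e}" "f1 \<noteq> f2"
    using orth(1)[of f1] orth(2)[of f2] f by auto
  show "card (insert f1 (insert f2 (A - {e}))) = Suc (card A)"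
    using new \<open>finite A\<close> card.remove[OF \<open>finite A\<close> \<open>e \<in> A\<close>] by simp
  show "idem_decomp (insert f1 (insert f2 (A - {e})))"
    unfolding idem_decomp_def
  proof (intro conjI ballI impI)
    fix g assume "g \<in> insert f1 (insert f2 (A - {e}))"
    then show "g \<noteq> 0" and "m g g = g" using f idem_decompD(1,2)[OF A] by auto
  next
    fix g h assume "g \<in> insert f1 (insert f2 (A - {e}))" "h \<in> insert f1 (insert f2 (A - {e}))"
      and "g \<noteq> h"
    then consider "g \<in> {f1, f2}" "h \<in> {f1, f2}" | "g \<in> {f1, f2}" "h \<in> A - {e}"
      | "g \<in> A - {e}" "h \<in> {f1, f2}" | "g \<in> A - {e}" "h \<in> A - {e}"
      by blast
    then show "m g h = 0"
    proof cases
      case 1 then show ?thesis using f(5) f21 \<open>g \<noteq> h\<close> by auto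
    next
      case 2 then show ?thesis using orth(1,2) by auto
    next
      case 3 then show ?thesis using orth(3,4) by auto
    next
      case 4 then show ?thesis using idem_decompD(3)[OF A, of g h] \<open>g \<noteq> h\<close> by simp
    qed
  next
    have "(\<Sum>g\<in>insert f1 (insert f2 (A - {e})). g) = e + (\<Sum>g\<in>A - {e}. g)"
      using new \<open>finite A\<close> unfolding e by (simp add: add.assoc)
    also have "\<dots> = u" using idem_decompD(4)[OF A] \<open>finite A\<close> \<open>e \<in> A\<close> by (simp add: sum.remove)
    finally show "(\<Sum>g\<in>insert f1 (insert f2 (A - {e})). g) = u" .
  qed
qed

lemma idem_decomp_refine:
  assumes "finite A" and "idem_decomp A" and "e \<in> A" and "\<not> prim e"
  obtains B where "idem_decomp B" and "card B = Suc (card A)"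
proof -
  have "e \<noteq> 0" "m e e = e" using idem_decompD(1,2)[OF assms(2,3)] .
  then obtain f1 f2 where "f1 \<noteq> 0" "f2 \<noteq> 0" "m f1 f1 = f1" "m f2 f2 = f2" "m f1 f2 = 0"
    and "e = f1 + f2"
    using \<open>\<not> prim e\<close> unfolding prim_def by blast
  from idem_decomp_split[OF assms(1-3) this] show thesis by (rule that)
qed

text \<open>A decomposition of maximal size cannot be refined, so it consists of primitive
  idempotents; by orthogonality it then contains every primitive idempotent.\<close>

lemma sum_prim_eq_unit:
  assumes fin: "finite (UNIV :: 'b set)" and "u \<noteq> 0"
  shows "(\<Sum>e | prim e. e) = u"
proof -
  have "idem_decomp {u}" using \<open>u \<noteq> 0\<close> m_unit by (simp add: idem_decomp_def)
  moreover have "\<forall>B. idem_decomp B \<longrightarrow> card B < Suc (card (UNIV :: 'b set))"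
    using card_mono[OF fin] by (simp add: le_imp_less_Suc)
  ultimately obtain A where A: "idem_decomp A" and max: "\<And>B. idem_decomp B \<Longrightarrow> card B \<le> card A"
    using ex_has_greatest_nat[of idem_decomp "{u}" card] by metis
  have finA: "finite A" using fin by (rule finite_subset[rotated]) simp
  have primA: "prim e" if eA: "e \<in> A" for e
  proof (rule ccontr)
    assume "\<not> prim e"
    with finA A eA obtain B where "idem_decomp B" and "card B = Suc (card A)"
      by (rule idem_decomp_refine)
    with max show False by fastforce
  qed
  have "f \<in> A" if "prim f" for f
  proof (rule ccontr)
    assume "f \<notin> A"
    have "f = m f u" by (simp add: m_unit_right)
    also have "\<dots> = (\<Sum>e\<in>A. m f e)" using m_sum[of f "\<lambda>e. e" A] by (simp add: idem_decompD(4)[OF A])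
    also have "\<dots> = 0"
      using \<open>f \<notin> A\<close> \<open>prim f\<close> primA by (intro sum.neutral) (auto intro: prim_orthogonal)
    finally show False using prim_nonzero[OF \<open>prim f\<close>] by simp
  qed
  with primA have "{e. prim e} = A" by blast
  then show ?thesis using idem_decompD(4)[OF A] by simp
qed

end

locale comm_mult_invol = comm_mult m u
  for m :: "'b::ab_group_add \<Rightarrow> 'b \<Rightarrow> 'b" and u :: 'b +
  fixes \<sigma> :: "'b \<Rightarrow> 'b"
  assumes \<sigma>_add: "\<sigma> (a + b) = \<sigma> a + \<sigma> b"
    and \<sigma>_mult: "\<sigma> (m a b) = m (\<sigma> a) (\<sigma> b)"
    and \<sigma>_\<sigma> [simp]: "\<sigma> (\<sigma> a) = a"
begin

lemma \<sigma>_zero [simp]: "\<sigma> 0 = 0"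
  using \<sigma>_add[of 0 0] by simp

lemma \<sigma>_eq_0_iff [simp]: "\<sigma> a = 0 \<longleftrightarrow> a = 0"
  by (metis \<sigma>_\<sigma> \<sigma>_zero)

lemma prim_\<sigma>:
  assumes "prim e"
  shows "prim (\<sigma> e)"
proof (rule primI)
  show "\<sigma> e \<noteq> 0" "m (\<sigma> e) (\<sigma> e) = \<sigma> e"
    using assms by (simp_all add: prim_nonzero prim_idem flip: \<sigma>_mult)
  show "x = 0 \<or> x = \<sigma> e" if "m x x = x" and "m (\<sigma> e) x = x" for x
    using prim_idem_below[OF assms, of "\<sigma> x"] that \<sigma>_mult by (metis \<sigma>_\<sigma> \<sigma>_zero)
qed

lemma m_orbit_pair:
  assumes "prim e" and "\<sigma> e \<noteq> e"
  shows "m e (e + \<sigma> e) = e"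
  using assms prim_orthogonal[OF assms(1) prim_\<sigma>[OF assms(1)]] by (simp add: m_add prim_idem)

lemma orbit_pair_not_prim:
  assumes "prim e" and "\<sigma> e \<noteq> e"
  shows "\<not> prim (e + \<sigma> e)"
  using assms prim_\<sigma>[OF assms(1)] prim_orthogonal[OF assms(1) prim_\<sigma>[OF assms(1)]]
  unfolding prim_def by metis

lemma orbit_pair_eq:
  assumes "prim x" "\<sigma> x \<noteq> x" "prim f" "\<sigma> f \<noteq> f" and "x + \<sigma> x = f + \<sigma> f"
  shows "x = f \<or> x = \<sigma> f"
proof (rule ccontr)
  assume "\<not> (x = f \<or> x = \<sigma> f)"
  then have "m x (f + \<sigma> f) = 0"
    using assms(1,3) prim_\<sigma>[OF assms(3)] by (simp add: m_add prim_orthogonal)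
  with m_orbit_pair[OF assms(1,2)] assms(1,5) prim_nonzero show False by simp
qed

definition prim_orbit_sums :: "'b \<Rightarrow> 'b set" where
  "prim_orbit_sums e0 = {e. prim e \<and> e \<noteq> e0 \<and> \<sigma> e = e} \<union> {e + \<sigma> e | e. prim e \<and> \<sigma> e \<noteq> e}"

lemma sum_prim_orbit_sums:
  assumes fin: "finite (UNIV :: 'b set)" and "u \<noteq> 0" and "prim e0" and "\<sigma> e0 = e0"
  shows "e0 + (\<Sum>e\<in>prim_orbit_sums e0. e) = u"
proof -
  define P1 where "P1 = {e. prim e \<and> e \<noteq> e0 \<and> \<sigma> e = e}"
  define P2 where "P2 = {e. prim e \<and> \<sigma> e \<noteq> e}"
  define H where "H = (\<lambda>e. e + \<sigma> e) ` P2"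
  have finite: "finite X" for X :: "'b set" using fin by (rule finite_subset[rotated]) simp
  have "(\<Sum>e\<in>P2. e) = (\<Sum>y\<in>H. \<Sum>x | x \<in> P2 \<and> x + \<sigma> x = y. x)"
    unfolding H_def by (rule sum.image_gen[OF finite])
  also have "\<dots> = (\<Sum>y\<in>H. y)"
  proof (rule sum.cong[OF refl])
    fix y assume "y \<in> H"
    then obtain f where f: "prim f" "\<sigma> f \<noteq> f" and y: "y = f + \<sigma> f"
      unfolding H_def P2_def by auto
    have "{x. x \<in> P2 \<and> x + \<sigma> x = y} = {f, \<sigma> f}"
      using f y orbit_pair_eq[OF _ _ f] prim_\<sigma>[OF f(1)] unfolding P2_def
      by (auto simp: add.commute)
    then show "(\<Sum>x | x \<in> P2 \<and> x + \<sigma> x = y. x) = y"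
      using f y by simp
  qed
  finally have P2_H: "(\<Sum>e\<in>P2. e) = (\<Sum>e\<in>H. e)" .
  have "{e. prim e} = insert e0 (P1 \<union> P2)"
    using assms(3,4) unfolding P1_def P2_def by auto
  moreover have "prim_orbit_sums e0 = P1 \<union> H"
    unfolding prim_orbit_sums_def P1_def P2_def H_def by auto
  moreover have "P1 \<inter> H = {}"
    using orbit_pair_not_prim unfolding P1_def P2_def H_def by auto
  moreover have "e0 \<notin> P1 \<union> P2" "P1 \<inter> P2 = {}"
    using assms(4) unfolding P1_def P2_def by auto
  ultimately show ?thesis
    using sum_prim_eq_unit[OF fin \<open>u \<noteq> 0\<close>] P2_H finite by (simp add: sum.union_disjoint)
qed

lemma prim_orbit_sums_orthogonal:
  assumes "prim e0" and "\<sigma> e0 = e0" and "h \<in> prim_orbit_sums e0"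
  shows "m h e0 = 0"
proof -
  have "m e e0 + m (\<sigma> e) e0 = 0" if "prim e" and "\<sigma> e \<noteq> e" for e
    using that assms(1,2) prim_\<sigma>[OF that(1)] prim_orthogonal by (metis \<sigma>_\<sigma> add_0)
  then show ?thesis
    using assms prim_orthogonal unfolding prim_orbit_sums_def by (auto simp: m_add_left)
qed

lemma prim_below_orbit_sum:
  assumes "\<sigma> e0 = e0" and "h \<in> prim_orbit_sums e0"
  shows "\<exists>e. prim e \<and> e \<noteq> e0 \<and> m e h = e"
  using assms m_orbit_pair prim_idem unfolding prim_orbit_sums_def by fastforce

end

section \<open>The group algebra\<close>

lemma gmul_comm: "gmul a b = gmul b (a :: 'g::{ab_group_add,finite} \<Rightarrow> 'a::comm_ring_1)"
proof
  fix g
  have "gmul a b g = (\<Sum>h\<in>UNIV. a (g - h) * b (g - (g - h)))"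
    unfolding gmul_def by (rule sum.reindex_bij_witness[of _ "\<lambda>h. g - h" "\<lambda>h. g - h"]) auto
  then show "gmul a b g = gmul b a g" by (simp add: gmul_def mult.commute)
qed

lemma gmul_assoc:
  "gmul (gmul a b) c = gmul a (gmul b (c :: 'g::{ab_group_add,finite} \<Rightarrow> 'a::comm_ring_1))"
proof
  fix g
  have "gmul (gmul a b) c g = (\<Sum>k\<in>UNIV. \<Sum>h\<in>UNIV. a h * b (k - h) * c (g - k))"
    unfolding gmul_def by (simp add: sum_distrib_right)
  also have "\<dots> = (\<Sum>h\<in>UNIV. \<Sum>k\<in>UNIV. a h * b (k - h) * c (g - k))"
    by (rule sum.swap)
  also have "\<dots> = (\<Sum>h\<in>UNIV. a h * (\<Sum>k\<in>UNIV. b (k - h) * c (g - k)))"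
    by (simp add: sum_distrib_left mult.assoc)
  also have "\<dots> = (\<Sum>h\<in>UNIV. a h * (\<Sum>j\<in>UNIV. b j * c (g - h - j)))"
  proof (rule sum.cong[OF refl])
    fix h
    have "(\<Sum>k\<in>UNIV. b (k - h) * c (g - k)) = (\<Sum>j\<in>UNIV. b j * c (g - h - j))"
      by (rule sum.reindex_bij_witness[of _ "\<lambda>j. j + h" "\<lambda>k. k - h"]) (auto simp: algebra_simps)
    then show "a h * (\<Sum>k\<in>UNIV. b (k - h) * c (g - k)) = a h * (\<Sum>j\<in>UNIV. b j * c (g - h - j))"
      by simp
  qed
  finally show "gmul (gmul a b) c g = gmul a (gmul b c) g" by (simp add: gmul_def)
qed

lemma gmul_add: "gmul a (b + c) = gmul a b + gmul a (c :: 'g::{ab_group_add,finite} \<Rightarrow> 'a::comm_ring_1)"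
  unfolding gmul_def by (rule ext) (simp add: sum.distrib distrib_left)

lemma gmul_gscalar_right: "gmul x (gscalar c) = (\<lambda>g. x g * c)"
  for x :: "'g::{ab_group_add,finite} \<Rightarrow> 'a::comm_ring_1"
proof
  fix g :: 'g
  have "x h * gscalar c (g - h) = (if h = g then x g * c else 0)" for h
    by (simp add: gscalar_def)
  then show "gmul x (gscalar c) g = x g * c" unfolding gmul_def by simp
qed

lemma gscalar_1_neq_0: "gscalar 1 \<noteq> (0 :: 'g::{ab_group_add,finite} \<Rightarrow> 'a::comm_ring_1)"
  by (metis gscalar_def zero_fun_def zero_neq_one)

interpretation GA: comm_mult "gmul :: ('g::{ab_group_add,finite} \<Rightarrow> 'a::comm_ring_1) \<Rightarrow> _" "gscalar 1"
proof
  show "gmul a b = gmul b a" for a b by (rule gmul_comm)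
  show "gmul (gscalar 1) a = a" for a by (simp add: gmul_comm[of "gscalar 1"] gmul_gscalar_right)
qed (simp_all add: gmul_assoc gmul_add)

lemma prim_idem_eq_GA_prim: "prim_idem = GA.prim"
  unfolding prim_idem_def GA.prim_def gidem_def by simp

lemma gmul_ge0: "gmul x ge0 = (\<lambda>_. sum x UNIV / of_nat CARD('g))"
  for x :: "'g::{ab_group_add,finite} \<Rightarrow> 'a::field"
  unfolding gmul_def ge0_def by (simp add: divide_inverse flip: sum_distrib_right)

lemma gideal_subset_idsum:
  assumes "finite S" and "h \<in> S"
  shows "gideal h \<subseteq> idsum (S :: ('g::{ab_group_add,finite} \<Rightarrow> 'a::comm_ring_1) set)"
proof
  fix z assume "z \<in> gideal h"
  then obtain t where z: "z = gmul t h" unfolding gideal_def by auto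
  have "(\<Sum>e\<in>S. gmul (if e = h then t else 0) e) = z"
    using assms by (simp add: z if_distrib[of "\<lambda>x. gmul x _"] cong: if_cong)
  then show "z \<in> idsum S" unfolding idsum_def by (auto intro!: exI[of _ "\<lambda>e. if e = h then t else 0"])
qed

lemma gideal_subset_gideal:
  assumes "gmul e h = (e :: 'g::{ab_group_add,finite} \<Rightarrow> 'a::comm_ring_1)"
  shows "gideal e \<subseteq> gideal h"
proof
  fix z assume "z \<in> gideal e"
  then obtain t where "z = gmul t e" unfolding gideal_def by auto
  then have "z = gmul (gmul t e) h" using assms by (simp add: GA.m_assoc)
  then show "z \<in> gideal h" unfolding gideal_def by auto
qed

interpretation GV: vector_space "gscale :: 'a::field \<Rightarrow> ('g \<Rightarrow> 'a) \<Rightarrow> _"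
  by unfold_locales (simp_all add: gscale_def fun_eq_iff algebra_simps)

lemma gdim_mono:
  assumes "A \<subseteq> (B :: ('g::finite \<Rightarrow> 'a::{field,finite}) set)"
  shows "gdim A \<le> gdim B"
proof -
  obtain C where "B \<subseteq> GV.span C" and "card C = GV.dim B"
    by (rule GV.basis_exists)
  then have "GV.dim A \<le> card C" using assms by (intro GV.dim_le_card) auto
  with \<open>card C = GV.dim B\<close> show ?thesis unfolding gdim_def by simp
qed

text \<open>\<open>gelem g\<close> is the group element \<open>g\<close> viewed in \<open>\<bbbF>G\<close>; the elements \<open>g - 1\<close>
  span the augmentation ideal.\<close>

definition gelem :: "'g \<Rightarrow> 'g \<Rightarrow> 'a::zero_neq_one" where
  "gelem g = (\<lambda>h. if h = g then 1 else 0)"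

lemma sum_apply: "sum f A x = (\<Sum>a\<in>A. f a x)"
  by (induction A rule: infinite_finite_induct) auto

lemma sum_eq_0_in_span:
  fixes y :: "'g::{zero,finite} \<Rightarrow> 'a::field"
  assumes "sum y UNIV = 0"
  shows "y \<in> GV.span ((\<lambda>g. gelem g - gelem 0) ` (UNIV - {0}))"
proof -
  have "y = (\<Sum>g\<in>UNIV - {0}. gscale (y g) (gelem g - gelem 0))"
  proof
    fix h :: 'g
    have "(\<Sum>g\<in>UNIV - {0}. gscale (y g) (gelem g - gelem 0)) h
        = (\<Sum>g\<in>UNIV - {0}. y g * ((if h = g then 1 else 0) - (if h = 0 then 1 else 0)))"
      by (simp add: sum_apply gscale_def gelem_def)
    also have "\<dots> = y h"
    proof (cases "h = 0")
      case True
      then show ?thesis using assms by (simp add: sum_negf sum_diff1)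
    next
      case False
      then have "(\<Sum>g\<in>UNIV - {0}. y g * ((if h = g then 1 else 0) - (if h = 0 then 1 else 0)))
          = (\<Sum>g\<in>UNIV - {0}. if g = h then y h else 0)"
        by (intro sum.cong) auto
      then show ?thesis using False by simp
    qed
    finally show "y h = (\<Sum>g\<in>UNIV - {0}. gscale (y g) (gelem g - gelem 0)) h" by simp
  qed
  also have "\<dots> \<in> GV.span ((\<lambda>g. gelem g - gelem 0) ` (UNIV - {0}))"
    by (intro GV.span_sum GV.span_scale GV.span_base) auto
  finally show ?thesis .
qed

lemma gdim_less_card_if_sum_eq_0:
  assumes "\<And>y. y \<in> V \<Longrightarrow> sum y UNIV = 0"
  shows "gdim (V :: ('g::{zero,finite} \<Rightarrow> 'a::field) set) < CARD('g)"
proof -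
  let ?W = "(\<lambda>g. gelem g - gelem 0) ` (UNIV - {0::'g}) :: ('g \<Rightarrow> 'a) set"
  have "gdim V \<le> card ?W"
    unfolding gdim_def using assms sum_eq_0_in_span by (intro GV.dim_le_card) auto
  also have "\<dots> \<le> card (UNIV - {0::'g})" by (rule card_image_le) simp
  also have "\<dots> < CARD('g)" by (simp add: card_Diff_singleton)
  finally show ?thesis .
qed

section \<open>Codes\<close>

lemma gmul_eq_0_iff_of_gscalar:
  fixes \<beta> \<gamma> :: "'g::{ab_group_add,finite} \<Rightarrow> 'a::field"
  assumes "gmul \<beta> \<gamma> = gscalar c" and "c \<noteq> 0"
  shows "gmul x \<beta> = 0 \<longleftrightarrow> x = 0"
proof
  assume "gmul x \<beta> = 0"
  then have "gmul x (gscalar c) = 0" by (simp flip: assms(1) GA.m_assoc)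
  with \<open>c \<noteq> 0\<close> show "x = 0" by (simp add: gmul_gscalar_right fun_eq_iff)
qed simp

lemma Lset_gmul_eq:
  assumes "gmul \<beta> \<gamma> = gscalar c" and "c \<noteq> 0"
  shows "Lset q (gmul x \<beta>) = Lset q x"
  unfolding Lset_def by (simp add: gmul_eq_0_iff_of_gscalar[OF assms] flip: GA.m_assoc)

lemma reldist_attained:
  fixes C :: "(('g::{ab_group_add,finite} \<Rightarrow> 'a::{zero,finite}) \<times> ('g \<Rightarrow> 'a)) set"
  assumes "c \<in> C" and "c \<noteq> (0, 0)"
  obtains c' where "c' \<in> C" "c' \<noteq> (0, 0)" "reldist C = real (wt2 c') / (2 * real CARD('g))"
proof -
  let ?W = "(\<lambda>c. real (wt2 c) / (2 * real CARD('g))) ` {c \<in> C. c \<noteq> (0, 0)}"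
  have "?W \<noteq> {}" using assms by blast
  then have "Min ?W \<in> ?W" by (intro Min_in) simp_all
  moreover have "reldist C = Min ?W" unfolding reldist_def by (rule arg_cong[where f = Min]) blast
  ultimately show thesis using that by auto
qed

lemma Dle_minimal_codeword:
  fixes C :: "(('g::{ab_group_add,finite} \<Rightarrow> 'a::{field,finite}) \<times> ('g \<Rightarrow> 'a)) set"
  assumes "C \<in> Dle q lam \<delta>"
  obtains \<beta> s where "gmul \<beta> (gtau q \<beta>) = gscalar (lam - 1)" and "(s, gmul s \<beta>) \<in> C"
    and "s \<noteq> 0" and "real (wt2 (s, gmul s \<beta>)) \<le> 2 * real CARD('g) * \<delta>"
proof -
  obtain \<beta> where \<beta>: "gmul \<beta> (gtau q \<beta>) = gscalar (lam - 1)" and C: "C = code (gscalar 1) \<beta>"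
    and "reldist C \<le> \<delta>"
    using assms unfolding Dle_def Dl_def by auto
  have C_eq: "C = {(s, gmul s \<beta>) | s. True}" unfolding C code_def by (simp add: GA.m_unit_right)
  have "(gscalar 1, \<beta>) \<in> C" "(gscalar 1, \<beta>) \<noteq> (0, 0)"
    using gscalar_1_neq_0 by (auto simp: C_eq GA.m_unit)
  then obtain c where "c \<in> C" "c \<noteq> (0, 0)" and c: "reldist C = real (wt2 c) / (2 * real CARD('g))"
    by (rule reldist_attained)
  moreover obtain s where "c = (s, gmul s \<beta>)" using \<open>c \<in> C\<close> C_eq by auto
  moreover have "real (wt2 c) \<le> 2 * real CARD('g) * \<delta>"
    using \<open>reldist C \<le> \<delta>\<close> c by (simp add: field_simps)
  ultimately show thesis using that[OF \<beta>] by auto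
qed

section \<open>The twisted involution\<close>

text \<open>These three properties are all that the proof uses of \<open>CARD('a) = q\<^sup>2\<close> and
  \<open>coprime CARD('g) q\<close>.\<close>

context
  fixes q :: nat
  assumes frobenius_add: "\<And>x y :: 'a::{field,finite}. (x + y) ^ q = x ^ q + y ^ q"
    and frobenius_invol: "\<And>x :: 'a. (x ^ q) ^ q = x"
    and card_neq_0: "of_nat CARD('g::{ab_group_add,finite}) \<noteq> (0 :: 'a)"
begin

lemma frobenius_exponent_pos: "q > 0"
  using frobenius_invol[of 0] by (cases q) auto

lemma frobenius_sum: "sum f A ^ q = (\<Sum>i\<in>A. f i ^ q)" for f :: "'b \<Rightarrow> 'a"
  by (induction A rule: infinite_finite_induct) (simp_all add: frobenius_add frobenius_exponent_pos)

lemma frobenius_of_nat: "(of_nat k :: 'a) ^ q = of_nat k"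
  by (induction k) (simp_all add: frobenius_add frobenius_exponent_pos)

lemma gtau_add: "gtau q (a + b) = gtau q a + gtau q (b :: 'g \<Rightarrow> 'a)"
  unfolding gtau_def by (simp add: frobenius_add fun_eq_iff)

lemma gtau_gtau: "gtau q (gtau q a) = (a :: 'g \<Rightarrow> 'a)"
  unfolding gtau_def by (simp add: frobenius_invol)

lemma gtau_gmul: "gtau q (gmul a b) = gmul (gtau q a) (gtau q (b :: 'g \<Rightarrow> 'a))"
proof
  fix g :: 'g
  have "gtau q (gmul a b) g = (\<Sum>h\<in>UNIV. a h ^ q * b (- g - h) ^ q)"
    unfolding gtau_def gmul_def by (simp add: frobenius_sum power_mult_distrib)
  also have "\<dots> = (\<Sum>h\<in>UNIV. a (- h) ^ q * b (- g - - h) ^ q)"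
    by (rule sum.reindex_bij_witness[of _ uminus uminus]) auto
  finally show "gtau q (gmul a b) g = gmul (gtau q a) (gtau q b) g"
    by (simp add: gtau_def gmul_def algebra_simps)
qed

interpretation GT: comm_mult_invol "gmul :: ('g \<Rightarrow> 'a) \<Rightarrow> _" "gscalar 1" "gtau q"
  by unfold_locales (simp_all add: gtau_add gtau_gmul gtau_gtau)

lemma gtau_ge0: "gtau q ge0 = (ge0 :: 'g \<Rightarrow> 'a)"
  unfolding gtau_def ge0_def by (simp add: power_inverse frobenius_of_nat)

lemma prim_ge0: "GA.prim (ge0 :: 'g \<Rightarrow> 'a)"
proof (rule GA.primI)
  show "ge0 \<noteq> (0 :: 'g \<Rightarrow> 'a)" using card_neq_0 by (simp add: ge0_def fun_eq_iff)
  show "gmul ge0 ge0 = (ge0 :: 'g \<Rightarrow> 'a)"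
    unfolding gmul_ge0 using card_neq_0 by (simp add: ge0_def inverse_eq_divide)
  fix x :: "'g \<Rightarrow> 'a"
  assume "gmul x x = x" and "gmul ge0 x = x"
  define c where "c = sum x UNIV / of_nat CARD('g)"
  have x: "x = (\<lambda>_. c)" using \<open>gmul ge0 x = x\<close> by (simp add: gmul_comm[of ge0] gmul_ge0 c_def)
  have "of_nat CARD('g) * c * c = c"
    using fun_cong[OF \<open>gmul x x = x\<close>, of 0] by (simp add: x gmul_def mult.assoc)
  then have "c = 0 \<or> c = inverse (of_nat CARD('g))"
    using card_neq_0 by (auto simp: field_simps)
  then show "x = 0 \<or> x = ge0" by (auto simp: x ge0_def fun_eq_iff)
qed

lemma Ehat_eq_prim_orbit_sums: "Ehat q = GT.prim_orbit_sums (ge0 :: 'g \<Rightarrow> 'a)"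
  unfolding Ehat_def GT.prim_orbit_sums_def prim_idem_eq_GA_prim ..

lemma sum_Ehat: "ge0 + (\<Sum>e\<in>Ehat q. e) = (gscalar 1 :: 'g \<Rightarrow> 'a)"
  unfolding Ehat_eq_prim_orbit_sums
  by (rule GT.sum_prim_orbit_sums[OF finite_class.finite_UNIV gscalar_1_neq_0 prim_ge0 gtau_ge0])

lemma gmul_decomposition: "x = gmul x ge0 + (\<Sum>e\<in>Ehat q. gmul x e)" for x :: "'g \<Rightarrow> 'a"
proof -
  have "x = gmul x (ge0 + (\<Sum>e\<in>Ehat q. e))" by (simp add: sum_Ehat GA.m_unit_right)
  then show ?thesis by (simp add: GA.m_add GA.m_sum)
qed

lemma mem_Jtilde_Lset: "x \<in> Jtilde (Lset q x)" for x :: "'g \<Rightarrow> 'a"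
proof -
  have "(\<Sum>e\<in>Ehat q. gmul x e) = (\<Sum>e | e \<in> Ehat q \<and> gmul e x \<noteq> 0. gmul x e)"
    by (rule sum.mono_neutral_right) (auto simp: gmul_comm)
  moreover have "(\<Sum>e | e \<in> Ehat q \<and> gmul e x \<noteq> 0. gmul x e) \<in> Lset q x"
    unfolding Lset_def idsum_def by (auto simp: gmul_comm)
  moreover have "gmul x ge0 \<in> gideal ge0" unfolding gideal_def by auto
  ultimately show ?thesis
    using gmul_decomposition[of x] unfolding Jtilde_def by force
qed

text \<open>Such an element lies in \<open>\<bbbF>G e\<^sub>0\<close>, so it is constant.\<close>

lemma wt_eq_card_if_Ehat_annihilates:
  assumes "\<And>e. e \<in> Ehat q \<Longrightarrow> gmul e x = 0" and "x \<noteq> 0"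
  shows "wt (x :: 'g \<Rightarrow> 'a) = CARD('g)"
proof -
  have "(\<Sum>e\<in>Ehat q. gmul x e) = 0" using assms(1) by (simp add: gmul_comm[of x])
  with gmul_decomposition[of x] have "x = gmul x ge0" by (simp only: add_0_right)
  then obtain c where x: "x = (\<lambda>_. c)" by (auto simp: gmul_ge0)
  with \<open>x \<noteq> 0\<close> show ?thesis by (simp add: wt_def fun_eq_iff)
qed

lemma sum_eq_0_if_mem_idsum:
  assumes "S \<subseteq> Ehat q" and "y \<in> idsum S"
  shows "sum (y :: 'g \<Rightarrow> 'a) UNIV = 0"
proof -
  obtain s where y: "y = (\<Sum>e\<in>S. gmul (s e) e)" using assms(2) unfolding idsum_def by auto
  have "gmul e ge0 = 0" if "e \<in> S" for e
    using GT.prim_orbit_sums_orthogonal[OF prim_ge0 gtau_ge0] that assms(1)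
    by (auto simp: Ehat_eq_prim_orbit_sums)
  then have "gmul y ge0 = 0"
    unfolding y by (simp add: GA.m_sum_left GA.m_assoc)
  then show ?thesis using card_neq_0 by (simp add: gmul_ge0 fun_eq_iff)
qed

lemma gdim_idsum_less_card: "S \<subseteq> Ehat q \<Longrightarrow> gdim (idsum S :: ('g \<Rightarrow> 'a) set) < CARD('g)"
  by (intro gdim_less_card_if_sum_eq_0 sum_eq_0_if_mem_idsum)

lemma mu_le_gdim_idsum:
  assumes "S \<subseteq> Ehat q" and "S \<noteq> {}"
  shows "mu TYPE('g) TYPE('a) \<le> gdim (idsum S :: ('g \<Rightarrow> 'a) set)"
proof -
  obtain h where "h \<in> S" using assms(2) by blast
  then obtain e :: "'g \<Rightarrow> 'a" where e: "prim_idem e" "e \<noteq> ge0" "gmul e h = e"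
    using GT.prim_below_orbit_sum[OF gtau_ge0] assms(1)
    by (auto simp: Ehat_eq_prim_orbit_sums prim_idem_eq_GA_prim)
  have "mu TYPE('g) TYPE('a) \<le> gdim (gideal e)"
    unfolding mu_def using e by (intro Min_le) auto
  also have "\<dots> \<le> gdim (idsum S)"
    using gideal_subset_gideal[OF e(3)] gideal_subset_idsum[OF _ \<open>h \<in> S\<close>] by (intro gdim_mono) auto
  finally show ?thesis .
qed

lemma Dle_subset_Dab_union:
  assumes "lam \<noteq> 1" and "\<delta> < 1"
  shows "(Dle q lam \<delta> :: (('g \<Rightarrow> 'a) \<times> ('g \<Rightarrow> 'a)) set set)
     \<subseteq> (\<Union>l \<in> {l. mu TYPE('g) TYPE('a) \<le> l \<and> l < CARD('g)}.
           \<Union>J \<in> Omega q l. \<Union>(a, b) \<in> pairs_le q J \<delta>. Dab q lam a b)"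
proof
  fix C :: "(('g \<Rightarrow> 'a) \<times> ('g \<Rightarrow> 'a)) set"
  assume "C \<in> Dle q lam \<delta>"
  then obtain \<beta> s where \<beta>: "gmul \<beta> (gtau q \<beta>) = gscalar (lam - 1)" and "(s, gmul s \<beta>) \<in> C"
    and "s \<noteq> 0" and wt: "real (wt2 (s, gmul s \<beta>)) \<le> 2 * real CARD('g) * \<delta>"
    by (rule Dle_minimal_codeword)
  define b where "b = gmul s \<beta>"
  define S where "S = {e \<in> Ehat q. gmul e s \<noteq> 0}"
  have Ls: "Lset q s = idsum S" and Lb: "Lset q b = idsum S"
    using Lset_gmul_eq[OF \<beta>] assms(1) unfolding b_def S_def Lset_def by simp_all
  have "S \<noteq> {}"
  proof
    assume "S = {}"
    then have "gmul e s = 0" "gmul e b = 0" if "e \<in> Ehat q" for e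
      using that by (auto simp: S_def b_def simp flip: GA.m_assoc)
    moreover have "b \<noteq> 0" using \<open>s \<noteq> 0\<close> gmul_eq_0_iff_of_gscalar[OF \<beta>] assms(1) by (simp add: b_def)
    ultimately have "wt2 (s, b) = 2 * CARD('g)"
      using \<open>s \<noteq> 0\<close> by (simp add: wt2_def wt_eq_card_if_Ehat_annihilates)
    with wt \<open>\<delta> < 1\<close> show False by (simp add: b_def)
  qed
  have "S \<subseteq> Ehat q" by (simp add: S_def)
  then have "idsum S \<in> Omega q (gdim (idsum S))"
    and "mu TYPE('g) TYPE('a) \<le> gdim (idsum S)" and "gdim (idsum S) < CARD('g)"
    using \<open>S \<noteq> {}\<close> by (auto simp: Omega_def intro: mu_le_gdim_idsum gdim_idsum_less_card)
  moreover have "(s, b) \<in> pairs_le q (idsum S) \<delta>"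
    using mem_Jtilde_Lset[of s] mem_Jtilde_Lset[of b] Ls Lb wt
    unfolding pairs_le_def Jstar_def b_def by simp
  moreover have "C \<in> Dab q lam s b"
    using \<open>C \<in> Dle q lam \<delta>\<close> \<open>(s, gmul s \<beta>) \<in> C\<close> unfolding Dab_def Dle_def b_def by simp
  ultimately show "C \<in> (\<Union>l \<in> {l. mu TYPE('g) TYPE('a) \<le> l \<and> l < CARD('g)}.
           \<Union>J \<in> Omega q l. \<Union>(a, b) \<in> pairs_le q J \<delta>. Dab q lam a b)"
    by blast
qed

end

theorem lemma3p11:
  fixes q :: nat and lam :: "'a::{field,finite}" and \<delta> :: real
  assumes "\<exists>p k. prime p \<and> k > 0 \<and> q = p ^ k"
    and "CARD('a) = q ^ 2"
    and "odd CARD('g::{ab_group_add,finite})"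
    and "coprime CARD('g) q"
    and "lam \<noteq> 0" and "lam \<noteq> 1"
    and "0 \<le> \<delta>" and "\<delta> \<le> 1 - 1 / real q"
  shows "(Dle q lam \<delta> :: (('g \<Rightarrow> 'a) \<times> ('g \<Rightarrow> 'a)) set set)
     \<subseteq> (\<Union>l \<in> {l. mu TYPE('g) TYPE('a) \<le> l \<and> l < CARD('g)}.
           \<Union>J \<in> Omega q l. \<Union>(a, b) \<in> pairs_le q J \<delta>. Dab q lam a b)"
proof -
  obtain p k where pk: "prime p" "k > 0" "q = p ^ k" using assms(1) by blast
  note field = finite_field_card_q_square[OF pk assms(2)]
  have "1 / real q > 0" using pk prime_gt_0_nat by simp
  then have "\<delta> < 1" using assms(8) by linarith
  show ?thesis
    by (rule Dle_subset_Dab_union[OF field(1,2) field(3)[OF assms(4)] assms(6) \<open>\<delta> < 1\<close>])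
qed

end
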